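(* Let $H\in(1/2,1)$, $\vartheta>0$ and let $S^H$ be a sub-fractional Brownian motion. There is a constant $C_{\vartheta,H}$ depending only on $\vartheta$ and $H$ such that for all $0\le s,t\le T$ with $s\ne t$, $$\mathbf E\Big[\int_s^T e^{-\vartheta(x-s)}dS^H_x\int_t^T e^{-\vartheta(y-t)}dS^H_y\Big]\le C_{\vartheta,H}|t-s|^{2H-2}$$ and $$\mathbf E\Big[\int_0^t e^{-\vartheta(t-u)}dS^H_u\int_0^s e^{-\vartheta(s-v)}dS^H_v\Big]\le C_{\vartheta,H}|t-s|^{2H-2}.$$
   Context: A sub-fractional Brownian motion $S^H$ is a centered Gaussian process with $S^H_0=0$ and covariance $\mathbf E(S^H_tS^H_s)=t^{2H}+s^{2H}-\frac12(|t-s|^{2H}+(t+s)^{2H})$. The integrals of deterministic functions with respect to $S^H$ are Wiener integrals, with $\mathbf E\int f\,dS^H\int g\,dS^H=\iint f(u)g(v)H(2H-1)(|u-v|^{2H-2}-(u+v)^{2H-2})\,du\,dv$. *)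

theory Defs
  imports "HOL-Analysis.Analysis"
begin

text \<open>Covariance kernel of the Wiener integral w.r.t. sub-fractional Brownian motion:
  phi_H(u,v) = H(2H-1)(|u-v|^(2H-2) - (u+v)^(2H-2)).\<close>
definition sfbm_kernel :: "real \<Rightarrow> real \<Rightarrow> real \<Rightarrow> real" where
  "sfbm_kernel H u v = H * (2*H - 1) * (\<bar>u - v\<bar> powr (2*H - 2) - (u + v) powr (2*H - 2))"

text \<open>E[ (int_a^b f dS^H) (int_c^d g dS^H) ] for deterministic f, g, given by the
  Wiener-integral isometry  iint f(u) g(v) phi_H(u,v) du dv.\<close>
definition sfbm_wiener_cov ::
  "real \<Rightarrow> (real \<Rightarrow> real) \<Rightarrow> real \<Rightarrow> real \<Rightarrow> (real \<Rightarrow> real) \<Rightarrow> real \<Rightarrow> real \<Rightarrow> real" where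
  "sfbm_wiener_cov H f a b g c d =
     (LBINT u:{a..b}. (LBINT v:{c..d}. f u * g v * sfbm_kernel H u v))"

end

theory Submission
  imports Defs
begin

text \<open>The kernel is bounded by \<open>H(2H-1)|u-v|^(2H-2)\<close>. Split the domain at \<open>|u-v| = |t-s|/2\<close>.
  Far from the diagonal the kernel is at most a constant times \<open>|t-s|^(2H-2)\<close>, and the integrals
  of the exponentials are bounded by \<open>1/\<theta>\<close>. Near the diagonal the two exponentials together
  have decayed by \<open>exp(-\<theta>|t-s|/4)\<close>, while the integrable singularity contributes
  \<open>|t-s|^(2H-1)\<close>; since \<open>x exp(-\<theta>x/4) \<le> 4/\<theta>\<close>, this is again \<open>O(|t-s|^(2H-2))\<close>.\<close>

lemma has_integral_powr_right:
  fixes r b u :: real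
  assumes "0 \<le> r" "b > -1"
  shows "((\<lambda>v. (v - u) powr b) has_integral r powr (b + 1) / (b + 1)) {u..u + r}"
  using has_integral_affinity'[OF has_integral_powr_from_0[OF assms(2,1), unfolded cbox_interval[symmetric]], of 1 "-u"]
  by (simp add: add.commute)

lemma has_integral_powr_left:
  fixes r b u :: real
  assumes "0 \<le> r" "b > -1"
  shows "((\<lambda>v. (u - v) powr b) has_integral r powr (b + 1) / (b + 1)) {u - r..u}"
proof -
  have "((\<lambda>x. (-x) powr b) has_integral r powr (b + 1) / (b + 1)) (cbox (-r) 0)"
    using has_integral_reflect_lemma_real[OF has_integral_powr_from_0[OF assms(2,1)]] by simp
  from has_integral_affinity'[OF this, of 1 "-u"] show ?thesis by simp
qed

lemma has_integral_abs_powr_near: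
  fixes r b u :: real
  assumes "0 \<le> r" "b > -1"
  shows "((\<lambda>v. if \<bar>u - v\<bar> \<le> r then \<bar>u - v\<bar> powr b else 0)
           has_integral 2 * r powr (b + 1) / (b + 1)) UNIV"
proof -
  have "((\<lambda>v. \<bar>u - v\<bar> powr b) has_integral r powr (b + 1) / (b + 1)) {u - r..u}"
    by (rule has_integral_eq[OF _ has_integral_powr_left[OF assms]]) simp
  moreover have "((\<lambda>v. \<bar>u - v\<bar> powr b) has_integral r powr (b + 1) / (b + 1)) {u..u + r}"
    by (rule has_integral_eq[OF _ has_integral_powr_right[OF assms]]) simp
  ultimately have "((\<lambda>v. \<bar>u - v\<bar> powr b) has_integral 2 * r powr (b + 1) / (b + 1)) {u - r..u + r}"
    using has_integral_combine[of "u - r" u "u + r"] assms(1) by fastforce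
  then have "((\<lambda>v. if v \<in> {u - r..u + r} then \<bar>u - v\<bar> powr b else 0)
               has_integral 2 * r powr (b + 1) / (b + 1)) UNIV"
    by (simp only: has_integral_restrict_UNIV)
  moreover have "v \<in> {u - r..u + r} \<longleftrightarrow> \<bar>u - v\<bar> \<le> r" for v
    by auto
  ultimately show ?thesis
    by simp
qed

text \<open>No integrability of \<open>f\<close> is required: a non-integrable function has Lebesgue integral 0.\<close>

lemma set_integral_le_has_integral:
  fixes f g :: "'a::euclidean_space \<Rightarrow> real"
  assumes le: "\<And>x. x \<in> A \<Longrightarrow> f x \<le> g x" and nonneg: "\<And>x. 0 \<le> g x"
    and g: "(g has_integral I) UNIV"
  shows "(LBINT x:A. f x) \<le> I"
proof -
  define h where "h = (\<lambda>x. indicator A x *\<^sub>R f x)"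
  have h_eq: "(LBINT x:A. f x) = integral\<^sup>L lborel h"
    by (simp add: h_def set_lebesgue_integral_def)
  have I_nonneg: "0 \<le> I"
    using has_integral_nonneg[OF g nonneg] .
  have nn_g: "(\<integral>\<^sup>+x. ennreal (g x) \<partial>lborel) = ennreal I"
    using nn_integral_has_integral_lebesgue'[OF nonneg g] by simp
  show ?thesis
  proof (cases "integrable lborel h")
    case True
    have pos: "integrable lborel (\<lambda>x. max (h x) 0)"
      using True by auto
    have "integral\<^sup>L lborel h \<le> integral\<^sup>L lborel (\<lambda>x. max (h x) 0)"
      by (rule integral_mono[OF True pos]) simp
    also have "\<dots> = enn2real (\<integral>\<^sup>+x. ennreal (max (h x) 0) \<partial>lborel)"
      by (rule integral_eq_nn_integral) (use pos in auto)
    also have "\<dots> \<le> enn2real (\<integral>\<^sup>+x. ennreal (g x) \<partial>lborel)"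
    proof (rule enn2real_mono)
      have "max (h x) 0 \<le> g x" for x
        using le nonneg by (auto simp: h_def indicator_def)
      then show "(\<integral>\<^sup>+x. ennreal (max (h x) 0) \<partial>lborel) \<le> (\<integral>\<^sup>+x. ennreal (g x) \<partial>lborel)"
        by (intro nn_integral_mono ennreal_leI)
    qed (simp add: nn_g)
    also have "\<dots> = I"
      using nn_g I_nonneg by simp
    finally show ?thesis
      using h_eq by simp
  next
    case False
    then show ?thesis
      using h_eq I_nonneg by (simp add: not_integrable_integral_eq)
  qed
qed

lemma sfbm_kernel_le:
  assumes "1/2 \<le> H"
  shows "sfbm_kernel H u v \<le> H * (2*H - 1) * \<bar>u - v\<bar> powr (2*H - 2)"
proof -
  have "0 \<le> H * (2*H - 1)"
    using assms by simp
  then show ?thesis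
    unfolding sfbm_kernel_def by (simp add: right_diff_distrib)
qed

lemma abs_powr_le_far_near:
  fixes r \<beta> x :: real
  assumes "0 < r" "\<beta> \<le> 0"
  shows "\<bar>x\<bar> powr \<beta> \<le> r powr \<beta> + (if \<bar>x\<bar> \<le> r then \<bar>x\<bar> powr \<beta> else 0)"
proof (cases "\<bar>x\<bar> \<le> r")
  case False
  then have "\<bar>x\<bar> powr \<beta> \<le> r powr \<beta>"
    using assms by (intro powr_mono2') auto
  with False show ?thesis
    by simp
qed simp

text \<open>Near the diagonal \<open>p u * q v\<close> is dominated by a function of \<open>u\<close> alone, so that the
  singular factor \<open>|u-v|^(2H-2)\<close> can be integrated in \<open>v\<close> first.\<close>

lemma sfbm_wiener_cov_le_near_far:
  fixes p q P :: "real \<Rightarrow> real"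
  assumes H: "1/2 < H" "H \<le> 1" and r: "0 < r" and E: "0 \<le> E"
    and p: "\<And>u. u \<in> {a..b} \<Longrightarrow> 0 \<le> p u \<and> p u \<le> P u"
    and q: "\<And>v. v \<in> {c..d} \<Longrightarrow> 0 \<le> q v"
    and near: "\<And>u v. u \<in> {a..b} \<Longrightarrow> v \<in> {c..d} \<Longrightarrow> \<bar>u - v\<bar> \<le> r \<Longrightarrow> p u * q v \<le> E * P u"
    and P_int: "(P has_integral IP) {a..b}" and q_int: "(q has_integral IQ) {c..d}"
  shows "sfbm_wiener_cov H p a b q c d
           \<le> H * (2*H - 1) * IP * (r powr (2*H - 2) * IQ + E * (2 * r powr (2*H - 1) / (2*H - 1)))"
proof -
  define K where "K = H * (2*H - 1)"
  define \<beta> where "\<beta> = 2*H - 2"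
  define N where "N = (\<lambda>u v. if \<bar>u - v\<bar> \<le> r then \<bar>u - v\<bar> powr \<beta> else 0)"
  define J where "J = 2 * r powr (2*H - 1) / (2*H - 1)"
  define M where "M = K * r powr \<beta> * IQ + K * E * J"
  have K: "0 \<le> K"
    using H by (simp add: K_def)
  have N: "0 \<le> N u v" for u v
    by (simp add: N_def)
  have N_int: "(N u has_integral J) UNIV" for u
    using has_integral_abs_powr_near[of r \<beta> u] r H by (simp add: N_def J_def \<beta>_def)
  have P: "0 \<le> P u" if "u \<in> {a..b}" for u
    using p[OF that] by linarith
  have M: "0 \<le> M"
    using K E r H has_integral_nonneg[OF q_int q] has_integral_nonneg[OF N_int N]
    by (simp add: M_def)
  have kernel: "sfbm_kernel H u v \<le> K * (r powr \<beta> + N u v)" for u v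
  proof -
    have "\<bar>u - v\<bar> powr \<beta> \<le> r powr \<beta> + N u v"
      unfolding N_def using abs_powr_le_far_near[of r \<beta> "u - v"] r H by (simp add: \<beta>_def)
    then show ?thesis
      using sfbm_kernel_le[of H u v] H K unfolding K_def \<beta>_def
      by (meson less_eq_real_def mult_left_mono order_trans)
  qed
  have pointwise: "p u * q v * sfbm_kernel H u v \<le> K * r powr \<beta> * P u * q v + K * E * P u * N u v"
    if u: "u \<in> {a..b}" and v: "v \<in> {c..d}" for u v
  proof -
    have pq: "0 \<le> p u * q v" "p u * q v \<le> P u * q v"
      using p[OF u] q[OF v] by (auto intro: mult_right_mono)
    have near_part: "N u v * (p u * q v) \<le> N u v * (E * P u)"
    proof (cases "\<bar>u - v\<bar> \<le> r")
      case True
      show ?thesis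
        by (rule mult_left_mono[OF near[OF u v True] N])
    qed (simp add: N_def)
    have "p u * q v * sfbm_kernel H u v \<le> p u * q v * (K * (r powr \<beta> + N u v))"
      by (rule mult_left_mono[OF kernel pq(1)])
    also have "\<dots> = K * (r powr \<beta> * (p u * q v)) + K * (N u v * (p u * q v))"
      by (simp add: algebra_simps)
    also have "\<dots> \<le> K * (r powr \<beta> * (P u * q v)) + K * (N u v * (E * P u))"
      using K pq(2) near_part by (intro add_mono mult_left_mono[OF _ K]) (simp_all add: mult_left_mono)
    finally show ?thesis
      by (simp add: algebra_simps)
  qed
  have inner: "(LBINT v:{c..d}. p u * q v * sfbm_kernel H u v) \<le> P u * M" if u: "u \<in> {a..b}" for u
  proof -
    have "((\<lambda>v. if v \<in> {c..d} then q v else 0) has_integral IQ) UNIV"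
      using q_int by (simp only: has_integral_restrict_UNIV)
    then have "((\<lambda>v. K * r powr \<beta> * P u * (if v \<in> {c..d} then q v else 0) + K * E * P u * N u v)
                 has_integral K * r powr \<beta> * P u * IQ + K * E * P u * J) UNIV"
      by (intro has_integral_add has_integral_mult_right N_int)
    moreover have "K * r powr \<beta> * P u * IQ + K * E * P u * J = P u * M"
      by (simp add: M_def algebra_simps)
    ultimately show ?thesis
      using pointwise[OF u] K E N P[OF u] q
      by (intro set_integral_le_has_integral) auto
  qed
  have outer: "((\<lambda>u. if u \<in> {a..b} then P u * M else 0) has_integral IP * M) UNIV"
    using has_integral_mult_left[OF P_int] by (simp only: has_integral_restrict_UNIV)
  have "sfbm_wiener_cov H p a b q c d \<le> IP * M"
    unfolding sfbm_wiener_cov_def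
    by (rule set_integral_le_has_integral[OF _ _ outer]) (use inner P M in auto)
  also have "IP * M = K * IP * (r powr \<beta> * IQ + E * J)"
    by (simp add: M_def algebra_simps)
  finally show ?thesis
    by (simp only: K_def \<beta>_def J_def)
qed

lemma has_integral_exp_decay_from:
  fixes c a b :: real
  assumes "c > 0" "a \<le> b"
  shows "((\<lambda>v. exp (- c * (v - a))) has_integral (1 - exp (- c * (b - a))) / c) {a..b}"
proof -
  have "((\<lambda>v. exp (- c * (v - a))) has_integral
          (- exp (- c * (b - a)) / c) - (- exp (- c * (a - a)) / c)) {a..b}"
    using assms
    by (intro fundamental_theorem_of_calculus)
       (auto intro!: derivative_eq_intros simp flip: has_real_derivative_iff_has_vector_derivative)
  then show ?thesis
    by (simp add: diff_divide_distrib)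
qed

lemma has_integral_exp_decay_to:
  fixes c a b :: real
  assumes "c > 0" "a \<le> b"
  shows "((\<lambda>v. exp (- c * (b - v))) has_integral (1 - exp (- c * (b - a))) / c) {a..b}"
proof -
  have "((\<lambda>v. exp (- c * (b - v))) has_integral
          exp (- c * (b - b)) / c - exp (- c * (b - a)) / c) {a..b}"
    using assms
    by (intro fundamental_theorem_of_calculus)
       (auto intro!: derivative_eq_intros simp flip: has_real_derivative_iff_has_vector_derivative)
  then show ?thesis
    by (simp add: diff_divide_distrib)
qed

lemma half_powr_le:
  fixes x \<beta> :: real
  assumes "0 < x" "-1 \<le> \<beta>"
  shows "(x/2) powr \<beta> \<le> 2 * x powr \<beta>"
proof -
  have "(2::real) powr - \<beta> \<le> 2"
    using powr_mono[of "- \<beta>" 1 "2::real"] assms(2) by simp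
  moreover have "(x/2) powr \<beta> = x powr \<beta> * 2 powr - \<beta>"
    using assms(1) by (simp add: powr_divide powr_minus_divide)
  ultimately show ?thesis
    using mult_left_mono[of "2 powr - \<beta>" 2 "x powr \<beta>"] by (simp add: mult.commute)
qed

lemma exp_decay_mult_le:
  fixes c x :: real
  assumes "0 < c"
  shows "exp (- c * x) * x \<le> 1/c"
proof -
  have "c * x \<le> exp (c * x)"
    using exp_ge_add_one_self[of "c * x"] by linarith
  then have "c * x * exp (- c * x) \<le> 1"
    by (simp add: exp_minus divide_simps)
  then show ?thesis
    using assms by (simp add: field_simps)
qed

lemma exp_mult_exp_le_decay:
  fixes \<theta> \<delta> x y :: real
  assumes "0 \<le> \<theta>" "0 \<le> y" "\<delta>/2 \<le> x + y"
  shows "exp (- \<theta> * x) * exp (- \<theta> * y) \<le> exp (- (\<theta>/4) * \<delta>) * exp (- (\<theta>/2) * x)"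
proof -
  have "\<theta> * (\<delta>/4) \<le> \<theta> * (x/2 + y)"
    using assms by (intro mult_left_mono) auto
  then show ?thesis
    by (simp add: exp_add[symmetric] algebra_simps)
qed

lemma sfbm_wiener_cov_exp_le:
  fixes wp wq :: "real \<Rightarrow> real"
  assumes H: "1/2 < H" "H \<le> 1" and \<theta>: "0 < \<theta>" and \<delta>: "0 < \<delta>"
    and wp: "\<And>u. u \<in> {a..b} \<Longrightarrow> 0 \<le> wp u" and wq: "\<And>v. v \<in> {c..d} \<Longrightarrow> 0 \<le> wq v"
    and sep: "\<And>u v. u \<in> {a..b} \<Longrightarrow> v \<in> {c..d} \<Longrightarrow> \<bar>u - v\<bar> \<le> \<delta>/2 \<Longrightarrow> \<delta>/2 \<le> wp u + wq v"
    and P_int: "((\<lambda>u. exp (- (\<theta>/2) * wp u)) has_integral IP) {a..b}" and IP: "IP \<le> 2/\<theta>"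
    and q_int: "((\<lambda>v. exp (- \<theta> * wq v)) has_integral IQ) {c..d}" and IQ: "IQ \<le> 1/\<theta>"
  shows "sfbm_wiener_cov H (\<lambda>u. exp (- \<theta> * wp u)) a b (\<lambda>v. exp (- \<theta> * wq v)) c d
           \<le> 4 * H * (2*H + 3) / \<theta>^2 * \<delta> powr (2*H - 2)"
proof -
  define K where "K = H * (2*H - 1)"
  define E where "E = exp (- (\<theta>/4) * \<delta>)"
  define X where "X = (\<delta>/2) powr (2*H - 2)"
  have K: "0 < K" and H1: "0 < 2*H - 1"
    using H by (simp_all add: K_def)
  have IP_nonneg: "0 \<le> IP"
    by (rule has_integral_nonneg[OF P_int]) simp
  have IQ_nonneg: "0 \<le> IQ"
    by (rule has_integral_nonneg[OF q_int]) simp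
  have X: "0 \<le> X" "X \<le> 2 * \<delta> powr (2*H - 2)"
    using half_powr_le[of \<delta> "2*H - 2"] \<delta> H by (simp_all add: X_def)
  have E: "E * \<delta> \<le> 4/\<theta>"
    using exp_decay_mult_le[of "\<theta>/4" \<delta>] \<theta> by (simp add: E_def)
  have "sfbm_wiener_cov H (\<lambda>u. exp (- \<theta> * wp u)) a b (\<lambda>v. exp (- \<theta> * wq v)) c d
          \<le> K * IP * (X * IQ + E * (2 * (\<delta>/2) powr (2*H - 1) / (2*H - 1)))"
    unfolding K_def X_def E_def
  proof (rule sfbm_wiener_cov_le_near_far[OF H _ _ _ _ _ P_int q_int])
    show "0 \<le> exp (- \<theta> * wp u) \<and> exp (- \<theta> * wp u) \<le> exp (- (\<theta>/2) * wp u)" if "u \<in> {a..b}" for u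
      using wp[OF that] \<theta> by simp
    show "exp (- \<theta> * wp u) * exp (- \<theta> * wq v) \<le> exp (- (\<theta>/4) * \<delta>) * exp (- (\<theta>/2) * wp u)"
      if "u \<in> {a..b}" "v \<in> {c..d}" "\<bar>u - v\<bar> \<le> \<delta>/2" for u v
      using \<theta> wq[OF that(2)] sep[OF that] by (intro exp_mult_exp_le_decay) simp_all
  qed (use \<delta> in simp_all)
  also have "\<dots> = K * IP * X * (IQ + E * \<delta> / (2*H - 1))"
  proof -
    have "(\<delta>/2) powr (2*H - 1) = X * (\<delta>/2)"
      using powr_add[of "\<delta>/2" "2*H - 2" 1] \<delta> by (simp add: X_def)
    then show ?thesis
      using H1 by (simp add: field_simps)
  qed
  also have "\<dots> \<le> K * (2/\<theta>) * (2 * \<delta> powr (2*H - 2)) * (1/\<theta> + (4/\<theta>) / (2*H - 1))"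
  proof (intro mult_mono add_mono divide_right_mono)
  qed (use K IP IP_nonneg IQ IQ_nonneg X E H1 \<theta> \<delta> in \<open>simp_all add: E_def\<close>)
  also have "\<dots> = 4 * H * (2*H + 3) / \<theta>^2 * \<delta> powr (2*H - 2)"
    using H1 \<theta> by (simp add: K_def field_simps power2_eq_square)
  finally show ?thesis .
qed

lemma exp_decay_integral_le:
  fixes c x :: real
  assumes "0 < c"
  shows "(1 - exp (- c * x)) / c \<le> 1/c"
  using assms by (simp add: divide_right_mono)

theorem lemma6p1:
  fixes H \<theta> :: real
  assumes "1/2 < H" and "H < 1" and "\<theta> > 0"
  shows "\<exists>C. \<forall>T s t. 0 \<le> s \<and> s \<le> T \<and> 0 \<le> t \<and> t \<le> T \<and> s \<noteq> t \<longrightarrow>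
      sfbm_wiener_cov H (\<lambda>x. exp (- \<theta> * (x - s))) s T (\<lambda>y. exp (- \<theta> * (y - t))) t T
        \<le> C * \<bar>t - s\<bar> powr (2*H - 2)
    \<and> sfbm_wiener_cov H (\<lambda>u. exp (- \<theta> * (t - u))) 0 t (\<lambda>v. exp (- \<theta> * (s - v))) 0 s
        \<le> C * \<bar>t - s\<bar> powr (2*H - 2)"
proof (intro exI allI impI conjI)
  fix T s t :: real
  assume st: "0 \<le> s \<and> s \<le> T \<and> 0 \<le> t \<and> t \<le> T \<and> s \<noteq> t"
  have H: "1/2 < H" "H \<le> 1" and \<theta>2: "0 < \<theta>/2" and \<delta>: "0 < \<bar>t - s\<bar>"
    using assms st by auto
  show "sfbm_wiener_cov H (\<lambda>x. exp (- \<theta> * (x - s))) s T (\<lambda>y. exp (- \<theta> * (y - t))) t T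
          \<le> 4 * H * (2*H + 3) / \<theta>^2 * \<bar>t - s\<bar> powr (2*H - 2)"
    using has_integral_exp_decay_from[OF \<theta>2, of s T] has_integral_exp_decay_from[OF assms(3), of t T]
      exp_decay_integral_le[OF \<theta>2] exp_decay_integral_le[OF assms(3)] st
    by (intro sfbm_wiener_cov_exp_le[OF H assms(3) \<delta>, where wp = "\<lambda>x. x - s" and wq = "\<lambda>y. y - t"])
       (auto simp: abs_if split: if_split_asm)
  show "sfbm_wiener_cov H (\<lambda>u. exp (- \<theta> * (t - u))) 0 t (\<lambda>v. exp (- \<theta> * (s - v))) 0 s
          \<le> 4 * H * (2*H + 3) / \<theta>^2 * \<bar>t - s\<bar> powr (2*H - 2)"
    using has_integral_exp_decay_to[OF \<theta>2, of 0 t] has_integral_exp_decay_to[OF assms(3), of 0 s]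
      exp_decay_integral_le[OF \<theta>2] exp_decay_integral_le[OF assms(3)] st
    by (intro sfbm_wiener_cov_exp_le[OF H assms(3) \<delta>, where wp = "\<lambda>u. t - u" and wq = "\<lambda>v. s - v"])
       (auto simp: abs_if split: if_split_asm)
qed

end
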